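(* Let $\{W_i\}_{i=1}^M$ be subspaces of $\mathbb{R}^N$ that do phase retrieval (respectively, norm retrieval). Suppose that for each $i\in\{1,\dots,M\}$, $W_i=U_i\oplus V_i$, where $U_i,V_i$ are subspaces with $U_i\perp V_i$. Then the family of subspaces $\{U_i\}_{i=1}^M\cup\{V_i\}_{i=1}^M$ does phase retrieval (respectively, norm retrieval) in $\mathbb{R}^N$.
   Context: A family of subspaces $\{W_i\}_{i=1}^M$ of $\mathbb{R}^N$ with orthogonal projections $\{P_i\}_{i=1}^M$ does phase retrieval (respectively, norm retrieval) if for all $x,y\in\mathbb{R}^N$, $\|P_ix\|=\|P_iy\|$ for all $i$ implies $x=\pm y$ (respectively, $\|x\|=\|y\|$). *)

theory Defs
  imports "HOL-Analysis.Analysis"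
begin

definition orth_proj :: "'a::euclidean_space set \<Rightarrow> 'a \<Rightarrow> 'a" where
  "orth_proj W x = (THE p. p \<in> W \<and> (\<forall>w\<in>W. orthogonal (x - p) w))"

definition does_phase_retrieval :: "'i set \<Rightarrow> ('i \<Rightarrow> 'a::euclidean_space set) \<Rightarrow> bool" where
  "does_phase_retrieval I W \<longleftrightarrow>
     (\<forall>x y. (\<forall>i\<in>I. norm (orth_proj (W i) x) = norm (orth_proj (W i) y))
            \<longrightarrow> x = y \<or> x = - y)"

definition does_norm_retrieval :: "'i set \<Rightarrow> ('i \<Rightarrow> 'a::euclidean_space set) \<Rightarrow> bool" where
  "does_norm_retrieval I W \<longleftrightarrow>
     (\<forall>x y. (\<forall>i\<in>I. norm (orth_proj (W i) x) = norm (orth_proj (W i) y))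
            \<longrightarrow> norm x = norm y)"

end

theory Submission
  imports Defs
begin

text \<open>If \<open>W = U \<oplus> V\<close> with \<open>U \<perp> V\<close>, then \<open>P\<^sub>W = P\<^sub>U + P\<^sub>V\<close> and, by Pythagoras,
  \<open>\<parallel>P\<^sub>W x\<parallel>\<^sup>2 = \<parallel>P\<^sub>U x\<parallel>\<^sup>2 + \<parallel>P\<^sub>V x\<parallel>\<^sup>2\<close>. Hence equal projection norms onto all the
  \<open>U\<^sub>i\<close> and \<open>V\<^sub>i\<close> force equal projection norms onto all the \<open>W\<^sub>i\<close>, so whatever the
  \<open>W\<^sub>i\<close> retrieve from these norms, the finer family retrieves as well.\<close>

lemma orth_proj_unique:
  fixes S :: "'a::euclidean_space set"
  assumes "subspace S"
    and p: "p \<in> S" "\<forall>w\<in>S. orthogonal (x - p) w"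
    and q: "q \<in> S" "\<forall>w\<in>S. orthogonal (x - q) w"
  shows "p = q"
proof -
  have "p - q \<in> S"
    using assms by (simp add: subspace_diff)
  then have "(x - q) \<bullet> (p - q) = 0" "(x - p) \<bullet> (p - q) = 0"
    using p q by (auto simp: orthogonal_def)
  then have "(p - q) \<bullet> (p - q) = 0"
    by (simp add: inner_diff_left)
  then show ?thesis
    by simp
qed

lemma orth_proj_eqI:
  fixes S :: "'a::euclidean_space set"
  assumes "subspace S" "p \<in> S" "\<forall>w\<in>S. orthogonal (x - p) w"
  shows "orth_proj S x = p"
  unfolding orth_proj_def
  using assms orth_proj_unique[OF assms(1)] by (intro the_equality) blast+

lemma orth_proj_in_subspace_orthogonal:
  fixes S :: "'a::euclidean_space set"
  assumes "subspace S"
  shows "orth_proj S x \<in> S" "\<forall>w\<in>S. orthogonal (x - orth_proj S x) w"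
proof -
  obtain y z where y: "y \<in> span S" and z: "\<And>w. w \<in> span S \<Longrightarrow> orthogonal z w"
    and x: "x = y + z"
    by (metis orthogonal_subspace_decomp_exists)
  have "y \<in> S"
    using y assms span_eq_iff by blast
  moreover have "\<forall>w\<in>S. orthogonal (x - y) w"
    using z x span_base by auto
  ultimately show "orth_proj S x \<in> S" "\<forall>w\<in>S. orthogonal (x - orth_proj S x) w"
    using orth_proj_eqI[OF assms] by simp_all
qed

lemma orth_proj_orthogonal_sum:
  fixes U V :: "'a::euclidean_space set"
  assumes U: "subspace U" and V: "subspace V" and UV: "\<forall>u\<in>U. \<forall>v\<in>V. orthogonal u v"
  shows "orth_proj {u + v | u v. u \<in> U \<and> v \<in> V} x = orth_proj U x + orth_proj V x"
proof (rule orth_proj_eqI[OF subspace_sums[OF U V]])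
  let ?pu = "orth_proj U x" and ?pv = "orth_proj V x"
  note pu = orth_proj_in_subspace_orthogonal[OF U, of x]
  note pv = orth_proj_in_subspace_orthogonal[OF V, of x]
  show "?pu + ?pv \<in> {u + v | u v. u \<in> U \<and> v \<in> V}"
    using pu pv by blast
  show "\<forall>w\<in>{u + v | u v. u \<in> U \<and> v \<in> V}. orthogonal (x - (?pu + ?pv)) w"
  proof clarify
    fix u v assume uv: "u \<in> U" "v \<in> V"
    have "(x - ?pu) \<bullet> u = 0" "(x - ?pv) \<bullet> v = 0" "?pv \<bullet> u = 0" "?pu \<bullet> v = 0"
      using pu pv uv UV by (auto simp: orthogonal_def inner_commute)
    then show "orthogonal (x - (?pu + ?pv)) (u + v)"
      unfolding orthogonal_def by (simp add: inner_diff_left inner_add_left inner_add_right)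
  qed
qed

lemma norm_orth_proj_orthogonal_sum:
  fixes U V :: "'a::euclidean_space set"
  assumes "subspace U" "subspace V" "\<forall>u\<in>U. \<forall>v\<in>V. orthogonal u v"
  shows "(norm (orth_proj {u + v | u v. u \<in> U \<and> v \<in> V} x))\<^sup>2
           = (norm (orth_proj U x))\<^sup>2 + (norm (orth_proj V x))\<^sup>2"
proof -
  have "orthogonal (orth_proj U x) (orth_proj V x)"
    using assms orth_proj_in_subspace_orthogonal by blast
  then show ?thesis
    using orth_proj_orthogonal_sum[OF assms] norm_add_Pythagorean by simp
qed

definition same_proj_norms :: "'i set \<Rightarrow> ('i \<Rightarrow> 'a::euclidean_space set) \<Rightarrow> 'a \<Rightarrow> 'a \<Rightarrow> bool" where
  "same_proj_norms I W x y \<longleftrightarrow> (\<forall>i\<in>I. norm (orth_proj (W i) x) = norm (orth_proj (W i) y))"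

lemma does_phase_retrieval_transfer:
  assumes "does_phase_retrieval I W"
    and "\<And>x y. same_proj_norms J W' x y \<Longrightarrow> same_proj_norms I W x y"
  shows "does_phase_retrieval J W'"
  using assms unfolding does_phase_retrieval_def same_proj_norms_def by blast

lemma does_norm_retrieval_transfer:
  assumes "does_norm_retrieval I W"
    and "\<And>x y. same_proj_norms J W' x y \<Longrightarrow> same_proj_norms I W x y"
  shows "does_norm_retrieval J W'"
  using assms unfolding does_norm_retrieval_def same_proj_norms_def by blast

lemma same_proj_norms_orthogonal_sums:
  fixes U V W :: "'i \<Rightarrow> 'a::euclidean_space set"
  assumes "\<forall>i\<in>I. subspace (U i)" "\<forall>i\<in>I. subspace (V i)"
    and "\<forall>i\<in>I. \<forall>u\<in>U i. \<forall>v\<in>V i. orthogonal u v"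
    and "\<forall>i\<in>I. W i = {u + v | u v. u \<in> U i \<and> v \<in> V i}"
    and UV: "same_proj_norms (I <+> I) (case_sum U V) x y"
  shows "same_proj_norms I W x y"
  unfolding same_proj_norms_def
proof
  fix i assume i: "i \<in> I"
  have "norm (orth_proj (U i) x) = norm (orth_proj (U i) y)"
       "norm (orth_proj (V i) x) = norm (orth_proj (V i) y)"
    using UV i unfolding same_proj_norms_def by force+
  then have "(norm (orth_proj (W i) x))\<^sup>2 = (norm (orth_proj (W i) y))\<^sup>2"
    using assms i norm_orth_proj_orthogonal_sum[of "U i" "V i"] by simp
  then show "norm (orth_proj (W i) x) = norm (orth_proj (W i) y)"
    by (simp add: power2_eq_iff_nonneg)
qed

theorem mainTheorem10:
  fixes W U V :: "nat \<Rightarrow> (real ^ 'n) set" and M :: nat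
  assumes subW: "\<forall>i\<in>{1..M}. subspace (W i)"
    and subU: "\<forall>i\<in>{1..M}. subspace (U i)"
    and subV: "\<forall>i\<in>{1..M}. subspace (V i)"
    and orthUV: "\<forall>i\<in>{1..M}. \<forall>u\<in>U i. \<forall>v\<in>V i. orthogonal u v"
    and sumUV: "\<forall>i\<in>{1..M}. W i = {u + v | u v. u \<in> U i \<and> v \<in> V i}"
  shows "(does_phase_retrieval {1..M} W \<longrightarrow>
            does_phase_retrieval ({1..M} <+> {1..M}) (case_sum U V))
       \<and> (does_norm_retrieval {1..M} W \<longrightarrow>
            does_norm_retrieval ({1..M} <+> {1..M}) (case_sum U V))"
  using same_proj_norms_orthogonal_sums[OF subU subV orthUV sumUV]
    does_phase_retrieval_transfer does_norm_retrieval_transfer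
  by blast

end
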